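(* Fix $m,n\in\mathbb N$ and convex bodies $K_0,\dots,K_m\subseteq\mathbb R^n$ containing the origin in their interiors; $\mathscr K=(K_0,\dots,K_m)$. Define \[D^{m,\circ}_2(\mathscr K)=\Big\{(x_1,\dots,x_m)\in\mathbb R^{nm}:\ h_{K_0}\Big(\sum_{i=1}^m x_i\Big)^2+\sum_{i=1}^m h_{-K_i}(x_i)^2\le1\Big\}.\] Then $(m+1)^{-1/2}D^{m,\circ}_2(\mathscr K)\subseteq D^{m,\circ}(\mathscr K)$, and equality holds if and only if $m=1$ and $K_0=-K_1$.
   Context: $h_L(u)=\sup_{y\in L}\langle u,y\rangle$ is the support function. $D^m(\mathscr K)=\{(x_1,\dots,x_m)\in(\mathbb R^n)^m: K_0\cap\bigcap_{i=1}^m(K_i+x_i)\neq\emptyset\}$ and $D^{m,\circ}(\mathscr K)$ is its polar $\{y:\langle y,x\rangle\le1\ \forall x\in D^m(\mathscr K)\}$. *)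

theory Defs
  imports "HOL-Analysis.Analysis"
begin

definition support_fun :: "'a::euclidean_space set \<Rightarrow> 'a \<Rightarrow> real" where
  "support_fun L u = (SUP y\<in>L. inner u y)"

text \<open>Points of (R^n)^m, represented as functions nat to R^n, with components 1..m
  and value 0 outside {1..m}.\<close>
definition tuples :: "nat \<Rightarrow> (nat \<Rightarrow> 'a::euclidean_space) set" where
  "tuples m = {x. \<forall>i. i \<notin> {1..m} \<longrightarrow> x i = 0}"

definition tuple_inner :: "nat \<Rightarrow> (nat \<Rightarrow> 'a::euclidean_space) \<Rightarrow> (nat \<Rightarrow> 'a) \<Rightarrow> real" where
  "tuple_inner m y x = (\<Sum>i=1..m. inner (y i) (x i))"

definition Dm :: "nat \<Rightarrow> (nat \<Rightarrow> 'a::euclidean_space set) \<Rightarrow> (nat \<Rightarrow> 'a) set" where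
  "Dm m K = {x \<in> tuples m. K 0 \<inter> (\<Inter>i\<in>{1..m}. (\<lambda>z. z + x i) ` K i) \<noteq> {}}"

definition tuple_polar :: "nat \<Rightarrow> (nat \<Rightarrow> 'a::euclidean_space) set \<Rightarrow> (nat \<Rightarrow> 'a) set" where
  "tuple_polar m D = {y \<in> tuples m. \<forall>x\<in>D. tuple_inner m y x \<le> 1}"

definition Dm_polar :: "nat \<Rightarrow> (nat \<Rightarrow> 'a::euclidean_space set) \<Rightarrow> (nat \<Rightarrow> 'a) set" where
  "Dm_polar m K = tuple_polar m (Dm m K)"

definition Dm_polar2 :: "nat \<Rightarrow> (nat \<Rightarrow> 'a::euclidean_space set) \<Rightarrow> (nat \<Rightarrow> 'a) set" where
  "Dm_polar2 m K = {x \<in> tuples m.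
     (support_fun (K 0) (\<Sum>i=1..m. x i))\<^sup>2 + (\<Sum>i=1..m. (support_fun (uminus ` K i) (x i))\<^sup>2) \<le> 1}"

definition tuple_scale :: "real \<Rightarrow> (nat \<Rightarrow> 'a::euclidean_space) set \<Rightarrow> (nat \<Rightarrow> 'a) set" where
  "tuple_scale c D = (\<lambda>x i. c *\<^sub>R x i) ` D"

end

theory Submission
  imports Defs
begin

text \<open>The polar of D^m(K) is the unit sublevel set of the support function
  H(y) = h_K0(y_1 + ... + y_m) + h_-K1(y_1) + ... + h_-Km(y_m) of D^m(K), while D^m_2(K) is the
  unit sublevel set of the sum Q(y) of the squares of the same m + 1 nonnegative terms.
  Cauchy-Schwarz gives H^2 <= (m + 1) Q, which is the inclusion. If the two sublevel sets
  coincide, homogeneity gives (m + 1) Q <= H^2; on the tuples (v, 0, ..., 0) this reads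
  (m + 1)(a^2 + b^2) <= (a + b)^2 <= 2(a^2 + b^2) with a = h_K0(v) and b = h_-K1(v) > 0, forcing
  m = 1 and a = b. A compact convex set is determined by its support function, so K0 = -K1.\<close>

lemma support_fun_eq_maximum:
  assumes "y \<in> L" "\<And>z. z \<in> L \<Longrightarrow> inner u z \<le> inner u y"
  shows "support_fun L u = inner u y"
  unfolding support_fun_def by (rule cSup_eq_maximum) (use assms in auto)

lemma support_fun_attained:
  fixes L :: "'a::euclidean_space set"
  assumes "compact L" "L \<noteq> {}"
  obtains y where "y \<in> L" "support_fun L u = inner u y"
    "\<And>z. z \<in> L \<Longrightarrow> inner u z \<le> inner u y"
proof -
  have "continuous_on L (inner u)" by (intro continuous_intros)
  then obtain y where "y \<in> L" "\<forall>z\<in>L. inner u z \<le> inner u y"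
    using continuous_attains_sup[OF assms] by blast
  then show ?thesis using that support_fun_eq_maximum by blast
qed

lemma inner_le_support_fun:
  fixes L :: "'a::euclidean_space set"
  assumes "compact L" "y \<in> L"
  shows "inner u y \<le> support_fun L u"
proof -
  obtain w where "support_fun L u = inner u w" "\<And>z. z \<in> L \<Longrightarrow> inner u z \<le> inner u w"
    using support_fun_attained[OF assms(1)] assms(2) by blast
  then show ?thesis using assms(2) by simp
qed

lemma support_fun_scaleR:
  fixes L :: "'a::euclidean_space set"
  assumes "compact L" "L \<noteq> {}" "t \<ge> 0"
  shows "support_fun L (t *\<^sub>R u) = t * support_fun L u"
proof -
  obtain w where w: "w \<in> L" "support_fun L u = inner u w"
    "\<And>z. z \<in> L \<Longrightarrow> inner u z \<le> inner u w"
    using support_fun_attained[OF assms(1,2)] by blast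
  have "support_fun L (t *\<^sub>R u) = inner (t *\<^sub>R u) w"
    by (rule support_fun_eq_maximum) (use w assms(3) in \<open>auto intro: mult_left_mono\<close>)
  then show ?thesis using w by simp
qed

lemma support_fun_zero: "L \<noteq> {} \<Longrightarrow> support_fun L 0 = 0"
  unfolding support_fun_def by simp

lemma support_fun_nonneg:
  fixes L :: "'a::euclidean_space set"
  assumes "compact L" "0 \<in> L"
  shows "0 \<le> support_fun L u"
  using inner_le_support_fun[OF assms, of u] by simp

lemma support_fun_pos:
  fixes L :: "'a::euclidean_space set"
  assumes "compact L" "0 \<in> interior L" "u \<noteq> 0"
  shows "0 < support_fun L u"
proof -
  obtain e where e: "e > 0" "ball 0 e \<subseteq> L"
    using assms(2) mem_interior by blast
  define y where "y = (e / 2 / norm u) *\<^sub>R u"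
  have "norm y = e / 2" using assms(3) e(1) by (simp add: y_def)
  then have "y \<in> L" using e by (auto simp: dist_norm)
  have "0 < e / 2 * norm u" using e(1) assms(3) by simp
  also have "\<dots> = inner u y"
    using assms(3) by (simp add: y_def power2_norm_eq_inner[symmetric] power2_eq_square)
  also have "\<dots> \<le> support_fun L u" using inner_le_support_fun[OF assms(1) \<open>y \<in> L\<close>] .
  finally show ?thesis .
qed

lemma support_fun_negations: "support_fun (uminus ` L) u = support_fun L (- u)"
  unfolding support_fun_def by (simp add: image_image)

lemma subset_if_support_fun_le:
  fixes L M :: "'a::euclidean_space set"
  assumes "compact L" "compact M" "convex M" "M \<noteq> {}"
    and "\<And>u. support_fun L u \<le> support_fun M u"
  shows "L \<subseteq> M"
proof
  fix p assume p: "p \<in> L"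
  show "p \<in> M"
  proof (rule ccontr)
    assume "p \<notin> M"
    then obtain a b where ab: "inner a p < b" "\<forall>x\<in>M. inner a x > b"
      using separating_hyperplane_closed_point[OF assms(3) compact_imp_closed[OF assms(2)]]
      by blast
    obtain w where w: "w \<in> M" "support_fun M (- a) = inner (- a) w"
      using support_fun_attained[OF assms(2,4)] by blast
    have "inner (- a) p \<le> support_fun M (- a)"
      using inner_le_support_fun[OF assms(1) p, of "- a"] assms(5)[of "- a"] by linarith
    then show False using ab w by auto
  qed
qed

lemma compact_convex_eq_if_support_fun_eq:
  fixes L M :: "'a::euclidean_space set"
  assumes "compact L" "convex L" "L \<noteq> {}" "compact M" "convex M" "M \<noteq> {}"
    and "\<And>u. support_fun L u = support_fun M u"
  shows "L = M"
  using subset_if_support_fun_le[of L M] subset_if_support_fun_le[of M L] assms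
  by (metis order_refl subset_antisym)

definition Dm_support :: "nat \<Rightarrow> (nat \<Rightarrow> 'a::euclidean_space set) \<Rightarrow> (nat \<Rightarrow> 'a) \<Rightarrow> real" where
  "Dm_support m K y =
     support_fun (K 0) (\<Sum>i=1..m. y i) + (\<Sum>i=1..m. support_fun (uminus ` K i) (y i))"

definition Dm_support2 :: "nat \<Rightarrow> (nat \<Rightarrow> 'a::euclidean_space set) \<Rightarrow> (nat \<Rightarrow> 'a) \<Rightarrow> real" where
  "Dm_support2 m K y =
     (support_fun (K 0) (\<Sum>i=1..m. y i))\<^sup>2 + (\<Sum>i=1..m. (support_fun (uminus ` K i) (y i))\<^sup>2)"

lemma tuple_inner_le_Dm_support:
  fixes K :: "nat \<Rightarrow> 'a::euclidean_space set"
  assumes "\<And>i. i \<le> m \<Longrightarrow> compact (K i)" "x \<in> Dm m K"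
  shows "tuple_inner m y x \<le> Dm_support m K y"
proof -
  obtain z where z: "z \<in> K 0" "\<And>i. i \<in> {1..m} \<Longrightarrow> z - x i \<in> K i"
    using assms(2) unfolding Dm_def by fastforce
  have "inner (y i) (x i) \<le> inner (y i) z + support_fun (uminus ` K i) (y i)"
    if i: "i \<in> {1..m}" for i
  proof -
    have "- (z - x i) \<in> uminus ` K i" using z(2)[OF i] by blast
    then have "inner (y i) (- (z - x i)) \<le> support_fun (uminus ` K i) (y i)"
      using i assms(1) by (intro inner_le_support_fun compact_negations) auto
    then show ?thesis by (simp add: inner_diff_right)
  qed
  then have "tuple_inner m y x \<le> (\<Sum>i=1..m. inner (y i) z + support_fun (uminus ` K i) (y i))"
    unfolding tuple_inner_def by (rule sum_mono)
  also have "\<dots> = inner (\<Sum>i=1..m. y i) z + (\<Sum>i=1..m. support_fun (uminus ` K i) (y i))"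
    by (simp add: sum.distrib inner_sum_left)
  also have "\<dots> \<le> Dm_support m K y"
    using inner_le_support_fun[OF assms(1) z(1)] by (simp add: Dm_support_def)
  finally show ?thesis .
qed

lemma Dm_support_attained:
  fixes K :: "nat \<Rightarrow> 'a::euclidean_space set"
  assumes "\<And>i. i \<le> m \<Longrightarrow> compact (K i)" "\<And>i. i \<le> m \<Longrightarrow> K i \<noteq> {}"
  obtains x where "x \<in> Dm m K" "tuple_inner m y x = Dm_support m K y"
proof -
  obtain z where z: "z \<in> K 0" "support_fun (K 0) (\<Sum>i=1..m. y i) = inner (\<Sum>i=1..m. y i) z"
    using support_fun_attained[OF assms] by blast
  have "\<exists>w. w \<in> uminus ` K i \<and> support_fun (uminus ` K i) (y i) = inner (y i) w"
    if "i \<in> {1..m}" for i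
    using support_fun_attained[of "uminus ` K i"] assms that
    by (metis atLeastAtMost_iff compact_negations image_is_empty)
  then obtain w where w: "\<And>i. i \<in> {1..m} \<Longrightarrow>
      w i \<in> uminus ` K i \<and> support_fun (uminus ` K i) (y i) = inner (y i) (w i)"
    by metis
  define x where "x = (\<lambda>i. if i \<in> {1..m} then z + w i else 0)"
  have "z \<in> (\<lambda>z. z + x i) ` K i" if i: "i \<in> {1..m}" for i
  proof -
    have "- w i \<in> K i" using w[OF i] by auto
    moreover have "z = - w i + x i" using i by (simp add: x_def)
    ultimately show ?thesis by blast
  qed
  then have "x \<in> Dm m K" using z(1) by (auto simp: Dm_def tuples_def x_def)
  moreover have "tuple_inner m y x = Dm_support m K y"
  proof -
    have "tuple_inner m y x = (\<Sum>i=1..m. inner (y i) z + inner (y i) (w i))"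
      unfolding tuple_inner_def by (rule sum.cong) (auto simp: x_def inner_add_right)
    also have "\<dots> = Dm_support m K y"
      using z w by (simp add: Dm_support_def sum.distrib inner_sum_left)
    finally show ?thesis .
  qed
  ultimately show ?thesis using that by blast
qed

lemma Dm_polar_eq:
  fixes K :: "nat \<Rightarrow> 'a::euclidean_space set"
  assumes "\<And>i. i \<le> m \<Longrightarrow> compact (K i)" "\<And>i. i \<le> m \<Longrightarrow> K i \<noteq> {}"
  shows "Dm_polar m K = {y \<in> tuples m. Dm_support m K y \<le> 1}"
proof -
  have "(\<forall>x\<in>Dm m K. tuple_inner m y x \<le> 1) \<longleftrightarrow> Dm_support m K y \<le> 1" for y
  proof
    assume bounded: "\<forall>x\<in>Dm m K. tuple_inner m y x \<le> 1"
    obtain x where x: "x \<in> Dm m K" "tuple_inner m y x = Dm_support m K y"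
      using Dm_support_attained[OF assms] .
    then show "Dm_support m K y \<le> 1" using bounded[rule_format, OF x(1)] by simp
  next
    assume "Dm_support m K y \<le> 1"
    then show "\<forall>x\<in>Dm m K. tuple_inner m y x \<le> 1"
      using tuple_inner_le_Dm_support[OF assms(1)] by (meson order_trans)
  qed
  then show ?thesis by (auto simp: Dm_polar_def tuple_polar_def)
qed

lemma Dm_support_nonneg:
  fixes K :: "nat \<Rightarrow> 'a::euclidean_space set"
  assumes "\<And>i. i \<le> m \<Longrightarrow> compact (K i)" "\<And>i. i \<le> m \<Longrightarrow> 0 \<in> K i"
  shows "0 \<le> Dm_support m K y"
proof -
  have "0 \<le> support_fun (uminus ` K i) (y i)" if "i \<in> {1..m}" for i
    using that assms by (intro support_fun_nonneg compact_negations) (auto simp: image_iff)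
  then have "0 \<le> (\<Sum>i=1..m. support_fun (uminus ` K i) (y i))" by (rule sum_nonneg)
  then show ?thesis
    using support_fun_nonneg[OF assms[of 0]] by (simp add: Dm_support_def)
qed

lemma Dm_support_scaleR:
  fixes K :: "nat \<Rightarrow> 'a::euclidean_space set"
  assumes "\<And>i. i \<le> m \<Longrightarrow> compact (K i)" "\<And>i. i \<le> m \<Longrightarrow> K i \<noteq> {}" "t \<ge> 0"
  shows "Dm_support m K (\<lambda>i. t *\<^sub>R y i) = t * Dm_support m K y"
proof -
  have "support_fun (uminus ` K i) (t *\<^sub>R y i) = t * support_fun (uminus ` K i) (y i)"
    if "i \<in> {1..m}" for i
    using that assms by (intro support_fun_scaleR compact_negations) auto
  then show ?thesis
    using support_fun_scaleR[OF assms(1,2) assms(3), of 0 "\<Sum>i=1..m. y i"]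
    by (simp add: Dm_support_def scaleR_sum_right sum_distrib_left distrib_left)
qed

lemma Dm_support2_scaleR:
  fixes K :: "nat \<Rightarrow> 'a::euclidean_space set"
  assumes "\<And>i. i \<le> m \<Longrightarrow> compact (K i)" "\<And>i. i \<le> m \<Longrightarrow> K i \<noteq> {}" "t \<ge> 0"
  shows "Dm_support2 m K (\<lambda>i. t *\<^sub>R y i) = t\<^sup>2 * Dm_support2 m K y"
proof -
  have "(support_fun (uminus ` K i) (t *\<^sub>R y i))\<^sup>2 = t\<^sup>2 * (support_fun (uminus ` K i) (y i))\<^sup>2"
    if "i \<in> {1..m}" for i
    using that assms by (simp add: support_fun_scaleR compact_negations power_mult_distrib)
  then show ?thesis
    using support_fun_scaleR[OF assms(1,2) assms(3), of 0 "\<Sum>i=1..m. y i"]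
    by (simp add: Dm_support2_def scaleR_sum_right sum_distrib_left distrib_left
        power_mult_distrib)
qed

lemma Dm_support_sq_le: "(Dm_support m K y)\<^sup>2 \<le> (real m + 1) * Dm_support2 m K y"
proof -
  define a where "a j = (if j = 0 then support_fun (K 0) (\<Sum>i=1..m. y i)
    else support_fun (uminus ` K j) (y j))" for j
  have "{0..m} = insert 0 {1..m}" by auto
  then have "Dm_support m K y = (\<Sum>j=0..m. a j)" "Dm_support2 m K y = (\<Sum>j=0..m. (a j)\<^sup>2)"
    by (simp_all add: a_def Dm_support_def Dm_support2_def)
  then show ?thesis
    using sum_squared_le_sum_of_squares[of a "{0..m}"] by (simp add: ac_simps)
qed

lemma Dm_sublevels_subset:
  fixes K :: "nat \<Rightarrow> 'a::euclidean_space set"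
  assumes "\<And>i. i \<le> m \<Longrightarrow> compact (K i)" "\<And>i. i \<le> m \<Longrightarrow> 0 \<in> K i"
  shows "{y \<in> tuples m. Dm_support2 m K y \<le> inverse (real m + 1)} \<subseteq>
    {y \<in> tuples m. Dm_support m K y \<le> 1}"
proof safe
  fix y assume "Dm_support2 m K y \<le> inverse (real m + 1)"
  then have "(real m + 1) * Dm_support2 m K y \<le> 1" by (simp add: field_simps)
  then have "(Dm_support m K y)\<^sup>2 \<le> 1" using Dm_support_sq_le[of m K y] by linarith
  then show "Dm_support m K y \<le> 1" by (simp add: power_le_one_iff Dm_support_nonneg[OF assms])
qed

lemma Dm_polar2_eq: "Dm_polar2 m K = {y \<in> tuples m. Dm_support2 m K y \<le> 1}"
  by (simp add: Dm_polar2_def Dm_support2_def)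

lemma mem_tuple_scale_iff:
  "c \<noteq> 0 \<Longrightarrow> y \<in> tuple_scale c D \<longleftrightarrow> (\<lambda>i. inverse c *\<^sub>R y i) \<in> D"
  unfolding tuple_scale_def by (auto simp: image_iff) (metis scaleR_scaleR right_inverse scaleR_one)

lemma tuple_scale_Dm_polar2_eq:
  fixes K :: "nat \<Rightarrow> 'a::euclidean_space set"
  assumes "\<And>i. i \<le> m \<Longrightarrow> compact (K i)" "\<And>i. i \<le> m \<Longrightarrow> K i \<noteq> {}" "c > 0"
  shows "tuple_scale c (Dm_polar2 m K) = {y \<in> tuples m. Dm_support2 m K y \<le> c\<^sup>2}"
proof -
  have "(\<lambda>i. inverse c *\<^sub>R y i) \<in> tuples m \<longleftrightarrow> y \<in> tuples m" for y :: "nat \<Rightarrow> 'a"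
    using assms(3) by (auto simp: tuples_def)
  moreover have "Dm_support2 m K (\<lambda>i. inverse c *\<^sub>R y i) \<le> 1 \<longleftrightarrow> Dm_support2 m K y \<le> c\<^sup>2" for y
  proof -
    have "Dm_support2 m K (\<lambda>i. inverse c *\<^sub>R y i) = Dm_support2 m K y / c\<^sup>2"
      using assms by (simp add: Dm_support2_scaleR power_inverse divide_inverse)
    then show ?thesis using assms(3) by (simp add: divide_le_eq)
  qed
  ultimately show ?thesis
    using assms(3) by (auto simp: mem_tuple_scale_iff Dm_polar2_eq)
qed

lemma Dm_support2_le_if_sublevels_eq:
  fixes K :: "nat \<Rightarrow> 'a::euclidean_space set"
  assumes "\<And>i. i \<le> m \<Longrightarrow> compact (K i)" "\<And>i. i \<le> m \<Longrightarrow> K i \<noteq> {}"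
    and sublevels: "{y \<in> tuples m. Dm_support m K y \<le> 1} = {y \<in> tuples m. Dm_support2 m K y \<le> r}"
    and "y \<in> tuples m" "Dm_support m K y > 0"
  shows "Dm_support2 m K y \<le> r * (Dm_support m K y)\<^sup>2"
proof -
  define t where "t = inverse (Dm_support m K y)"
  have t: "t > 0" using assms(5) by (simp add: t_def)
  have "Dm_support m K (\<lambda>i. t *\<^sub>R y i) = 1"
    using Dm_support_scaleR[OF assms(1,2), where t=t and y=y] t assms(5) by (simp add: t_def)
  then have "(\<lambda>i. t *\<^sub>R y i) \<in> {y \<in> tuples m. Dm_support m K y \<le> 1}"
    using assms(4) by (simp add: tuples_def)
  then have "Dm_support2 m K (\<lambda>i. t *\<^sub>R y i) \<le> r"
    unfolding sublevels by simp
  then have "t\<^sup>2 * Dm_support2 m K y \<le> r"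
    using Dm_support2_scaleR[OF assms(1,2), where t=t and y=y] t by simp
  then show ?thesis
    using assms(5) by (simp add: t_def power_inverse field_simps)
qed

lemma Dm_supports_single:
  fixes K :: "nat \<Rightarrow> 'a::euclidean_space set" and v :: 'a
  assumes "m \<ge> 1" "\<And>i. i \<le> m \<Longrightarrow> K i \<noteq> {}"
  defines "y \<equiv> \<lambda>i. if i = 1 then v else 0"
  shows "Dm_support m K y = support_fun (K 0) v + support_fun (uminus ` K 1) v"
    and "Dm_support2 m K y = (support_fun (K 0) v)\<^sup>2 + (support_fun (uminus ` K 1) v)\<^sup>2"
proof -
  have sum_single: "(\<Sum>i=1..m. f (support_fun (uminus ` K i) (y i))) = f (support_fun (uminus ` K 1) v)"
    if "f 0 = 0" for f :: "real \<Rightarrow> real"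
  proof -
    have "(\<Sum>i=1..m. f (support_fun (uminus ` K i) (y i)))
        = (\<Sum>i=1..m. if i = 1 then f (support_fun (uminus ` K 1) v) else 0)"
      by (rule sum.cong) (use assms(2) that in \<open>auto simp: y_def support_fun_zero\<close>)
    also have "\<dots> = f (support_fun (uminus ` K 1) v)" using assms(1) by (simp add: sum.delta)
    finally show ?thesis .
  qed
  have "(\<Sum>i=1..m. y i) = v" using assms(1) by (simp add: y_def sum.delta)
  then show "Dm_support m K y = support_fun (K 0) v + support_fun (uminus ` K 1) v"
    and "Dm_support2 m K y = (support_fun (K 0) v)\<^sup>2 + (support_fun (uminus ` K 1) v)\<^sup>2"
    using sum_single[of "\<lambda>x. x"] sum_single[of "\<lambda>x. x\<^sup>2"]
    by (simp_all add: Dm_support_def Dm_support2_def)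
qed

lemma sum_squares_le_square_sum_imp_eq:
  fixes a b :: real
  assumes "(real n + 1) * (a\<^sup>2 + b\<^sup>2) \<le> (a + b)\<^sup>2" "n \<ge> 1" "b \<noteq> 0"
  shows "n = 1 \<and> a = b"
proof -
  have pos: "a\<^sup>2 + b\<^sup>2 > 0" using assms(3) by (simp add: add_nonneg_pos)
  have "(a + b)\<^sup>2 = 2 * (a\<^sup>2 + b\<^sup>2) - (a - b)\<^sup>2" by (simp add: power2_eq_square algebra_simps)
  then have "(real n - 1) * (a\<^sup>2 + b\<^sup>2) + (a - b)\<^sup>2 \<le> 0"
    using assms(1) by (simp add: algebra_simps)
  moreover have "0 \<le> (real n - 1) * (a\<^sup>2 + b\<^sup>2)" using assms(2) pos by simp
  ultimately have "(real n - 1) * (a\<^sup>2 + b\<^sup>2) = 0" "(a - b)\<^sup>2 = 0"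
    by (smt (verit) zero_le_power2)+
  then show ?thesis using pos assms(2) by simp
qed

lemma symmetric_if_Dm_sublevels_eq:
  fixes K :: "nat \<Rightarrow> 'a::euclidean_space set"
  assumes "m \<ge> 1"
    and convex: "\<And>i. i \<le> m \<Longrightarrow> convex (K i)"
    and compact: "\<And>i. i \<le> m \<Longrightarrow> compact (K i)"
    and interior: "\<And>i. i \<le> m \<Longrightarrow> 0 \<in> interior (K i)"
    and sublevels: "{y \<in> tuples m. Dm_support m K y \<le> 1} =
      {y \<in> tuples m. Dm_support2 m K y \<le> inverse (real m + 1)}"
  shows "m = 1 \<and> K 0 = uminus ` K 1"
proof -
  have nonempty: "K i \<noteq> {}" if "i \<le> m" for i using interior[OF that] interior_subset by blast
  have single: "m = 1 \<and> support_fun (K 0) v = support_fun (uminus ` K 1) v" if "v \<noteq> 0" for v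
  proof -
    define y where "y = (\<lambda>i::nat. if i = 1 then v else 0)"
    define a b where "a = support_fun (K 0) v" and "b = support_fun (uminus ` K 1) v"
    have "a \<ge> 0"
      using support_fun_nonneg[OF compact] interior interior_subset unfolding a_def by blast
    moreover have "b > 0"
      using support_fun_pos[OF compact interior, of 1 "- v"] assms(1) that
      by (simp add: b_def support_fun_negations)
    moreover have "y \<in> tuples m" using assms(1) by (simp add: y_def tuples_def)
    ultimately have "a\<^sup>2 + b\<^sup>2 \<le> inverse (real m + 1) * (a + b)\<^sup>2"
      using Dm_support2_le_if_sublevels_eq[OF compact nonempty sublevels, where y=y]
        Dm_supports_single[OF assms(1) nonempty, where v=v]
      by (simp add: y_def a_def b_def)
    then have "(real m + 1) * (a\<^sup>2 + b\<^sup>2) \<le> (a + b)\<^sup>2"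
      by (simp add: field_simps)
    then have "m = 1 \<and> a = b"
      using sum_squares_le_square_sum_imp_eq assms(1) \<open>b > 0\<close> by simp
    then show ?thesis by (simp add: a_def b_def)
  qed
  obtain v :: 'a where "v \<noteq> 0" using nonzero_Basis nonempty_Basis by blast
  then have "m = 1" using single by blast
  have "support_fun (K 0) u = support_fun (uminus ` K 1) u" for u
  proof (cases "u = 0")
    case True
    then show ?thesis using nonempty[of 0] nonempty[of 1] assms(1) by (simp add: support_fun_zero)
  qed (use single in blast)
  then have "K 0 = uminus ` K 1"
    using \<open>m = 1\<close> convex compact nonempty
    by (intro compact_convex_eq_if_support_fun_eq compact_negations convex_negations) auto
  with \<open>m = 1\<close> show ?thesis ..
qed

lemma Dm_sublevels_eq_if_symmetric:
  fixes K :: "nat \<Rightarrow> 'a::euclidean_space set"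
  assumes "compact (K 0)" "0 \<in> K 0" "K 0 = uminus ` K 1"
  shows "{y \<in> tuples 1. Dm_support 1 K y \<le> 1} = {y \<in> tuples 1. Dm_support2 1 K y \<le> inverse 2}"
proof -
  have "Dm_support 1 K y \<le> 1 \<longleftrightarrow> Dm_support2 1 K y \<le> inverse 2" for y :: "nat \<Rightarrow> 'a"
  proof -
    define a where "a = support_fun (K 0) (y 1)"
    have "a \<ge> 0" using support_fun_nonneg[OF assms(1,2)] by (simp add: a_def)
    then have "a \<le> 1 / 2 \<longleftrightarrow> a\<^sup>2 \<le> (1 / 2)\<^sup>2"
      by (simp add: power_mono_iff del: power_divide)
    moreover have "Dm_support 1 K y = 2 * a" "Dm_support2 1 K y = 2 * a\<^sup>2"
      using assms(3) by (simp_all add: Dm_support_def Dm_support2_def a_def)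
    ultimately show ?thesis by (simp add: power_divide mult.commute)
  qed
  then show ?thesis by simp
qed

theorem proposition5p8:
  fixes m :: nat and K :: "nat \<Rightarrow> 'a::euclidean_space set"
  assumes "m \<ge> 1"
    and "\<And>i. i \<le> m \<Longrightarrow> convex (K i)"
    and "\<And>i. i \<le> m \<Longrightarrow> compact (K i)"
    and "\<And>i. i \<le> m \<Longrightarrow> 0 \<in> interior (K i)"
  shows "tuple_scale (inverse (sqrt (real m + 1))) (Dm_polar2 m K) \<subseteq> Dm_polar m K \<and>
         (tuple_scale (inverse (sqrt (real m + 1))) (Dm_polar2 m K) = Dm_polar m K
           \<longleftrightarrow> (m = 1 \<and> K 0 = uminus ` K 1))"
proof -
  have zero: "0 \<in> K i" if "i \<le> m" for i using assms(4)[OF that] interior_subset by blast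
  then have nonempty: "K i \<noteq> {}" if "i \<le> m" for i using that by blast
  have polar: "Dm_polar m K = {y \<in> tuples m. Dm_support m K y \<le> 1}"
    using Dm_polar_eq[OF assms(3) nonempty] .
  have polar2: "tuple_scale (inverse (sqrt (real m + 1))) (Dm_polar2 m K) =
      {y \<in> tuples m. Dm_support2 m K y \<le> inverse (real m + 1)}"
    using tuple_scale_Dm_polar2_eq[OF assms(3) nonempty] by (simp add: power_inverse)
  have "{y \<in> tuples m. Dm_support2 m K y \<le> inverse (real m + 1)} \<subseteq>
      {y \<in> tuples m. Dm_support m K y \<le> 1}"
    using Dm_sublevels_subset[OF assms(3) zero] .
  moreover have "m = 1 \<and> K 0 = uminus ` K 1"
    if "{y \<in> tuples m. Dm_support2 m K y \<le> inverse (real m + 1)} =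
      {y \<in> tuples m. Dm_support m K y \<le> 1}"
    using symmetric_if_Dm_sublevels_eq[of m K, OF assms that[symmetric]] .
  moreover have "{y \<in> tuples m. Dm_support2 m K y \<le> inverse (real m + 1)} =
      {y \<in> tuples m. Dm_support m K y \<le> 1}" if "m = 1" "K 0 = uminus ` K 1"
    using Dm_sublevels_eq_if_symmetric[of K, OF assms(3)[of 0] zero[of 0]] that by simp
  ultimately show ?thesis unfolding polar polar2 by blast
qed

end
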